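(* Let $\Lambda$ be a generalized Pauli channel on $(\mathbb C^2)^{\otimes n}$ and $\Lambda_E$ its complementary (environment) channel. Then the Holevo information of the ensemble in which $x\in\mathbb F_2^n$ is chosen uniformly and the state $\Lambda_E(|x\rangle\langle x|)$ is prepared satisfies $$\chi\Big(\{2^{-n},\Lambda_E(|x\rangle\langle x|)\}_{x\in\mathbb F_2^n}\Big)\le \eta_n\big(1-P_{\Lambda,Z}(0)\big).$$
   Context: $\{|x\rangle\}_{x\in\mathbb F_2^n}$ is the computational basis of $(\mathbb C^2)^{\otimes n}$. Unitaries $\mathbf X^x|x'\rangle=|x'-x\rangle$, $\mathbf Z^z|x'\rangle=(-1)^{x'\cdot z}|x'\rangle$ with $x'\cdot z=\sum_i x'_iz_i\in\mathbb F_2$. A channel $\Lambda$ is generalized Pauli if $\Lambda(\rho)=\sum_{x,z\in\mathbb F_2^n}P_\Lambda(x,z)\,\mathbf X^x\mathbf Z^z\rho(\mathbf X^x\mathbf Z^z)^\dagger$ for a probability distribution $P_\Lambda$ on $\mathbb F_2^n\times\mathbb F_2^n$; $P_{\Lambda,Z}(z)=\sum_xP_\Lambda(x,z)$. For a Stinespring isometry $V:\mathcal H\to\mathcal H\otimes\mathcal H_E$ with $\Lambda(\rho)=\mathrm{Tr}_E V\rho V^\dagger$, the complementary channel is $\Lambda_E(\rho)=\mathrm{Tr}_{\mathcal H}V\rho V^\dagger$ (Holevo quantities do not depend on the choice). The Holevo information of an ensemble $\{p_i,\rho_i\}$ is $\chi=S(\sum_ip_i\rho_i)-\sum_ip_iS(\rho_i)$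 with von Neumann entropy $S$ in base 2. $h$ is the binary entropy (base 2), $\bar h(x)=h(x)$ for $x<1/2$ and $\bar h(x)=1$ for $x\ge1/2$, and $\eta_k(x)=\bar h(x)+kx$. *)

theory Defs
  imports "Jordan_Normal_Form.Schur_Decomposition" "HOL-Computational_Algebra.Polynomial"
begin

(* n-qubit Hilbert space (C^2)^{\<otimes> n} has dimension 2^n; computational basis vector |x>,
   x \<in> F_2^n, is encoded as the natural number x < 2^n whose i-th bit is x_i. *)

definition f2dot :: "nat \<Rightarrow> nat \<Rightarrow> nat \<Rightarrow> bool" where
  "f2dot n x z = odd (card {i. i < n \<and> bit x i \<and> bit z i})"

definition pauliX :: "nat \<Rightarrow> nat \<Rightarrow> complex mat" where
  "pauliX n x = mat (2^n) (2^n) (\<lambda>(i,j). if i = xor j x then 1 else 0)"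

definition pauliZ :: "nat \<Rightarrow> nat \<Rightarrow> complex mat" where
  "pauliZ n z = mat (2^n) (2^n) (\<lambda>(i,j). if i = j then (if f2dot n i z then -1 else 1) else 0)"

definition pauli_dist :: "nat \<Rightarrow> (nat \<Rightarrow> nat \<Rightarrow> real) \<Rightarrow> bool" where
  "pauli_dist n P \<longleftrightarrow> (\<forall>x<2^n. \<forall>z<2^n. P x z \<ge> 0) \<and> (\<Sum>x<2^n. \<Sum>z<2^n. P x z) = 1"

definition pauli_channel :: "nat \<Rightarrow> (nat \<Rightarrow> nat \<Rightarrow> real) \<Rightarrow> complex mat \<Rightarrow> complex mat" where
  "pauli_channel n P \<rho> = mat (2^n) (2^n) (\<lambda>(i,j).
     \<Sum>x<2^n. \<Sum>z<2^n. complex_of_real (P x z) *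
        ((pauliX n x * pauliZ n z) * \<rho> * mat_adjoint (pauliX n x * pauliZ n z)) $$ (i,j))"

definition PZ :: "nat \<Rightarrow> (nat \<Rightarrow> nat \<Rightarrow> real) \<Rightarrow> nat \<Rightarrow> real" where
  "PZ n P z = (\<Sum>x<2^n. P x z)"

(* H \<otimes> H_E with dim H = d, dim H_E = e; basis |i>\<otimes>|k> has index i*e + k *)
definition ptrace_E :: "nat \<Rightarrow> nat \<Rightarrow> complex mat \<Rightarrow> complex mat" where
  "ptrace_E d e M = mat d d (\<lambda>(i,j). \<Sum>k<e. M $$ (i*e+k, j*e+k))"

definition ptrace_H :: "nat \<Rightarrow> nat \<Rightarrow> complex mat \<Rightarrow> complex mat" where
  "ptrace_H d e M = mat e e (\<lambda>(k,l). \<Sum>i<d. M $$ (i*e+k, i*e+l))"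

definition stinespring :: "nat \<Rightarrow> nat \<Rightarrow> (complex mat \<Rightarrow> complex mat) \<Rightarrow> complex mat \<Rightarrow> bool" where
  "stinespring d e \<Lambda> V \<longleftrightarrow> V \<in> carrier_mat (d*e) d \<and> mat_adjoint V * V = 1\<^sub>m d \<and>
     (\<forall>\<rho> \<in> carrier_mat d d. \<Lambda> \<rho> = ptrace_E d e (V * \<rho> * mat_adjoint V))"

definition compl_channel :: "nat \<Rightarrow> nat \<Rightarrow> complex mat \<Rightarrow> complex mat \<Rightarrow> complex mat" where
  "compl_channel d e V \<rho> = ptrace_H d e (V * \<rho> * mat_adjoint V)"

definition ket_bra :: "nat \<Rightarrow> nat \<Rightarrow> complex mat" where
  "ket_bra d x = mat d d (\<lambda>(i,j). if i = x \<and> j = x then 1 else 0)"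

definition ent_term :: "real \<Rightarrow> real" where
  "ent_term t = (if t \<le> 0 then 0 else - t * log 2 t)"

(* von Neumann entropy (base 2): sum over eigenvalues with multiplicity
   (roots of the characteristic polynomial; real for Hermitian matrices) *)
definition vn_entropy :: "complex mat \<Rightarrow> real" where
  "vn_entropy \<rho> = sum_mset (image_mset (\<lambda>\<mu>. ent_term (Re \<mu>)) (proots (char_poly \<rho>)))"

definition holevo :: "nat \<Rightarrow> nat \<Rightarrow> (nat \<Rightarrow> real) \<Rightarrow> (nat \<Rightarrow> complex mat) \<Rightarrow> real" where
  "holevo d K p \<rho>s = vn_entropy (mat d d (\<lambda>(i,j). \<Sum>k<K. complex_of_real (p k) * \<rho>s k $$ (i,j)))
     - (\<Sum>k<K. p k * vn_entropy (\<rho>s k))"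

definition bin_ent :: "real \<Rightarrow> real" where
  "bin_ent x = ent_term x + ent_term (1 - x)"

definition hbar :: "real \<Rightarrow> real" where
  "hbar x = (if x < 1/2 then bin_ent x else 1)"

definition eta :: "nat \<Rightarrow> real \<Rightarrow> real" where
  "eta k x = hbar x + real k * x"

end

theory Submission
  imports Defs
begin

text \<open>Both entropies in the Holevo quantity are classical entropies of \<open>P\<close>.
  For a pure input, \<open>\<Lambda>\<^sub>E(|x\<rangle>\<langle>x|)\<close> and \<open>\<Lambda>(|x\<rangle>\<langle>x|)\<close> are \<open>M\<^sup>\<dagger>M\<close> and \<open>MM\<^sup>\<dagger>\<close>
  (up to transposition) for a reshaping \<open>M\<close> of \<open>V|x\<rangle>\<close>, so they share their nonzero spectrum;
  \<open>\<Lambda>(|x\<rangle>\<langle>x|)\<close> is diagonal with entries \<open>P\<^sub>X(x \<oplus> i)\<close>, so every output has entropy \<open>H(P\<^sub>X)\<close>.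
  In the same way the uniform average of the \<open>\<Lambda>\<^sub>E(|x\<rangle>\<langle>x|)\<close> shares its nonzero spectrum with
  the normalised Choi matrix of \<open>\<Lambda>\<close>, which the Bell basis (the vectorised Pauli operators,
  orthogonal by the character sum over \<open>\<bbbF>\<^sub>2\<^sup>n\<close>) diagonalises with eigenvalues \<open>P(a,b)\<close>;
  so the average has entropy \<open>H(P)\<close>. Hence \<open>\<chi> = H(X,Z) - H(X) \<le> H(Z)\<close>, and grouping all
  \<open>z \<noteq> 0\<close> gives \<open>H(Z) \<le> h(q) + n q\<close> with \<open>q = 1 - P\<^sub>Z(0)\<close>.\<close>

section \<open>Shannon entropy\<close>

lemma ent_term_nonneg: "t \<ge> 0 \<Longrightarrow> ent_term t = - t * log 2 t"
  by (simp add: ent_term_def)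

lemma ent_term_le_cross_entropy:
  assumes p: "p \<ge> 0" and c: "c > 0"
  shows "ent_term p \<le> - p * log 2 c + (c - p) / ln 2"
proof (cases "p = 0")
  case True
  then show ?thesis using c by (simp add: ent_term_def)
next
  case False
  with p have p0: "p > 0" by simp
  have "p * ln (c / p) \<le> p * (c / p - 1)"
    using c p0 by (intro mult_left_mono ln_le_minus_one) auto
  also have "\<dots> = c - p" using p0 by (simp add: field_simps)
  finally have "p * (ln c - ln p) \<le> c - p" using c p0 by (simp add: ln_div)
  moreover have "ent_term p + p * log 2 c = p * (ln c - ln p) / ln 2"
    using p0 by (simp add: ent_term_def log_def field_simps)
  ultimately have "ent_term p + p * log 2 c \<le> (c - p) / ln 2" by (simp add: divide_right_mono)
  then show ?thesis by simp
qed

lemma bin_ent_le_1: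
  assumes "0 \<le> q" "q \<le> 1"
  shows "bin_ent q \<le> 1"
proof -
  have "log 2 (1/2) = -1" by (simp add: log_divide)
  then have "bin_ent q \<le> (q + (1/2 - q) / ln 2) + ((1 - q) + (1/2 - (1 - q)) / ln 2)"
    unfolding bin_ent_def
    using assms ent_term_le_cross_entropy[of q "1/2"] ent_term_le_cross_entropy[of "1 - q" "1/2"]
    by (intro add_mono) auto
  also have "\<dots> = 1" by (simp add: field_simps)
  finally show ?thesis .
qed

lemma ent_term_sum:
  assumes "\<And>b. b \<in> S \<Longrightarrow> f b \<ge> 0"
  shows "ent_term (sum f S) = (\<Sum>b\<in>S. - f b * log 2 (sum f S))"
  using assms by (simp add: ent_term_nonneg sum_nonneg sum_negf sum_distrib_right)

lemma sum_ent_term_le_card: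
  assumes S: "finite S" and p: "\<And>b. b \<in> S \<Longrightarrow> p b \<ge> 0"
    and card: "real (card S) \<le> N" and N: "N > 0"
  shows "(\<Sum>b\<in>S. ent_term (p b)) \<le> ent_term (sum p S) + sum p S * log 2 N"
proof (cases "sum p S = 0")
  case True
  then have "\<forall>b\<in>S. p b = 0" using S p by (simp add: sum_nonneg_eq_0_iff)
  then show ?thesis using True by (simp add: ent_term_def)
next
  case False
  define q where "q = sum p S"
  have q: "q > 0" using False p by (simp add: q_def order_less_le sum_nonneg)
  have "(\<Sum>b\<in>S. ent_term (p b)) \<le> (\<Sum>b\<in>S. - p b * log 2 (q / N) + (q / N - p b) / ln 2)"
    by (intro sum_mono ent_term_le_cross_entropy) (use p q N in auto)
  also have "\<dots> = - q * log 2 (q / N) + (real (card S) * (q / N) - q) / ln 2"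
    by (simp add: q_def sum.distrib sum_divide_distrib[symmetric] sum_subtractf
        sum_distrib_right[symmetric])
  also have "\<dots> \<le> - q * log 2 (q / N)"
  proof -
    have "real (card S) * (q / N) \<le> N * (q / N)" using card q N by (intro mult_right_mono) auto
    then show ?thesis using N by (simp add: divide_nonpos_pos)
  qed
  also have "\<dots> = ent_term q + q * log 2 N"
    using q N by (simp add: ent_term_def log_divide algebra_simps)
  finally show ?thesis by (simp add: q_def)
qed

lemma joint_entropy_le_marginals:
  assumes A: "finite A" and B: "finite B"
    and P: "\<And>a b. a \<in> A \<Longrightarrow> b \<in> B \<Longrightarrow> P a b \<ge> 0"
    and total: "(\<Sum>a\<in>A. \<Sum>b\<in>B. P a b) = 1"
  shows "(\<Sum>a\<in>A. \<Sum>b\<in>B. ent_term (P a b))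
      \<le> (\<Sum>a\<in>A. ent_term (\<Sum>b\<in>B. P a b)) + (\<Sum>b\<in>B. ent_term (\<Sum>a\<in>A. P a b))"
proof -
  define PA where "PA a = (\<Sum>b\<in>B. P a b)" for a
  define PB where "PB b = (\<Sum>a\<in>A. P a b)" for b
  have PA: "P a b \<le> PA a" and PB: "P a b \<le> PB b" if "a \<in> A" "b \<in> B" for a b
    unfolding PA_def PB_def using that A B P
    by (auto intro: member_le_sum[where f = "\<lambda>b. P a b"] member_le_sum[where f = "\<lambda>a. P a b"])
  have HA: "(\<Sum>a\<in>A. ent_term (PA a)) = (\<Sum>a\<in>A. \<Sum>b\<in>B. - P a b * log 2 (PA a))"
    unfolding PA_def by (intro sum.cong refl ent_term_sum) (use P in auto)
  have HB: "(\<Sum>b\<in>B. ent_term (PB b)) = (\<Sum>a\<in>A. \<Sum>b\<in>B. - P a b * log 2 (PB b))"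
    unfolding PB_def by (subst sum.swap) (intro sum.cong refl ent_term_sum, use P in auto)
  have pointwise: "ent_term (P a b) + P a b * log 2 (PA a) + P a b * log 2 (PB b)
      \<le> (PA a * PB b - P a b) / ln 2" if "a \<in> A" "b \<in> B" for a b
  proof (cases "P a b = 0")
    case True
    then show ?thesis using PA[OF that] PB[OF that] by (simp add: ent_term_def)
  next
    case False
    with P[OF that] have "P a b > 0" by simp
    then have "PA a > 0" "PB b > 0" using PA[OF that] PB[OF that] by linarith+
    then show ?thesis
      using ent_term_le_cross_entropy[of "P a b" "PA a * PB b"] P[OF that]
      by (simp add: log_mult algebra_simps)
  qed
  have "(\<Sum>a\<in>A. \<Sum>b\<in>B. ent_term (P a b)) - (\<Sum>a\<in>A. ent_term (PA a)) - (\<Sum>b\<in>B. ent_term (PB b))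
      = (\<Sum>a\<in>A. \<Sum>b\<in>B. ent_term (P a b) + P a b * log 2 (PA a) + P a b * log 2 (PB b))"
    unfolding HA HB by (simp add: sum.distrib sum_subtractf sum_negf)
  also have "\<dots> \<le> (\<Sum>a\<in>A. \<Sum>b\<in>B. (PA a * PB b - P a b) / ln 2)"
    by (intro sum_mono pointwise)
  also have "\<dots> = ((\<Sum>a\<in>A. PA a) * (\<Sum>b\<in>B. PB b) - 1) / ln 2"
    using total by (simp add: sum_divide_distrib[symmetric] sum_subtractf sum_product)
  also have "\<dots> = 0"
    using total sum.swap[of P B A] by (simp add: PA_def PB_def)
  finally show ?thesis by (simp add: PA_def PB_def)
qed

lemma entropy_le_eta:
  fixes p :: "nat \<Rightarrow> real"
  assumes p: "\<And>b. b < 2^n \<Longrightarrow> p b \<ge> 0" and total: "(\<Sum>b<2^n. p b) = 1"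
  shows "(\<Sum>b<2^n. ent_term (p b)) \<le> eta n (1 - p 0)"
proof -
  define q where "q = 1 - p 0"
  have split: "{..<2^n} = insert 0 {1..<(2::nat)^n}" by auto
  have rest: "(\<Sum>b\<in>{1..<2^n}. p b) = q"
    using total unfolding split q_def by simp
  have "(\<Sum>b\<in>{1..<2^n}. p b) \<ge> 0" by (intro sum_nonneg p) auto
  then have q: "0 \<le> q" "q \<le> 1" using rest p[of 0] by (auto simp: q_def)
  have "(\<Sum>b\<in>{1..<2^n}. ent_term (p b)) \<le> ent_term q + q * log 2 (2^n)"
    using sum_ent_term_le_card[of "{1..<2^n}" p "2^n"] p rest by simp
  then have "(\<Sum>b<2^n. ent_term (p b)) \<le> bin_ent q + real n * q"
    unfolding split by (simp add: bin_ent_def q_def log_nat_power algebra_simps)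
  also have "bin_ent q \<le> hbar q" using bin_ent_le_1[OF q] by (simp add: hbar_def)
  finally show ?thesis by (simp add: eta_def q_def)
qed

lemma pauli_dist_cond_entropy_le_eta:
  assumes "pauli_dist n P"
  shows "(\<Sum>a<2^n. \<Sum>b<2^n. ent_term (P a b)) - (\<Sum>a<2^n. ent_term (\<Sum>b<2^n. P a b))
    \<le> eta n (1 - PZ n P 0)"
proof -
  have P: "\<And>a b. a < 2^n \<Longrightarrow> b < 2^n \<Longrightarrow> P a b \<ge> 0"
    and total: "(\<Sum>a<2^n. \<Sum>b<2^n. P a b) = 1"
    using assms by (auto simp: pauli_dist_def)
  have "(\<Sum>b<2^n. PZ n P b) = 1"
    using total unfolding PZ_def by (subst sum.swap)
  then have "(\<Sum>b<2^n. ent_term (PZ n P b)) \<le> eta n (1 - PZ n P 0)"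
    by (intro entropy_le_eta) (auto simp: PZ_def intro!: sum_nonneg P)
  with joint_entropy_le_marginals[of "{..<2^n}" "{..<2^n}" P] P total show ?thesis
    by (simp add: PZ_def)
qed

section \<open>Spectral invariance of the von Neumann entropy\<close>

lemma vn_entropy_linear_factors:
  assumes "char_poly A = (\<Prod>a\<leftarrow>as. [:- a, 1:])"
  shows "vn_entropy A = (\<Sum>a\<leftarrow>as. ent_term (Re a))"
proof -
  have "proots (\<Prod>a\<leftarrow>as. [:- a, 1:]) = mset as"
  proof (induction as)
    case (Cons a as)
    have "(\<Prod>a\<leftarrow>as. [:- a, 1:]) \<noteq> (0::complex poly)" by (auto simp: prod_list_zero_iff)
    then have "proots (\<Prod>a\<leftarrow>a # as. [:- a, 1:]) = proots [:- a, 1:] + proots (\<Prod>a\<leftarrow>as. [:- a, 1:])"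
      unfolding list.map prod_list.Cons by (intro proots_mult) auto
    then show ?case using Cons by simp
  qed simp
  then show ?thesis unfolding vn_entropy_def assms
    by (simp add: mset_map[symmetric] sum_mset_sum_list del: mset_map)
qed

lemma vn_entropy_mat_diag: "vn_entropy (mat_diag n f) = (\<Sum>i<n. ent_term (Re (f i)))"
proof -
  have "vn_entropy (mat_diag n f) = (\<Sum>a\<leftarrow>diag_mat (mat_diag n f). ent_term (Re a))"
    by (intro vn_entropy_linear_factors char_poly_upper_triangular[of _ n])
      (auto simp: mat_diag_def upper_triangular_def)
  also have "\<dots> = (\<Sum>i<n. ent_term (Re (f i)))"
    by (simp add: diag_mat_def mat_diag_def interv_sum_list_conv_sum_set_nat atLeast0LessThan)
  finally show ?thesis .
qed

lemma char_poly_zero_mat: "char_poly (0\<^sub>m k k :: complex mat) = [:0, 1:] ^ k"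
  using char_poly_upper_triangular[of "0\<^sub>m k k" k]
  by (simp add: upper_triangular_def prod_list_replicate)

lemma char_poly_mult_commute:
  fixes A B :: "complex mat"
  assumes A: "A \<in> carrier_mat m k" and B: "B \<in> carrier_mat k m"
  shows "char_poly (A * B) * [:0, 1:] ^ k = [:0, 1:] ^ m * char_poly (B * A)"
proof -
  have AB: "A * B \<in> carrier_mat m m" and BA: "B * A \<in> carrier_mat k k" using A B by auto
  define X where "X = four_block_mat (A * B) (0\<^sub>m m k) B (0\<^sub>m k k)"
  define Y where "Y = four_block_mat (0\<^sub>m m m) (0\<^sub>m m k) B (B * A)"
  define S where "S = four_block_mat (1\<^sub>m m) A (0\<^sub>m k m) (1\<^sub>m k)"
  define T where "T = four_block_mat (1\<^sub>m m) (- A) (0\<^sub>m k m) (1\<^sub>m k)"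
  have carr: "{X, Y, S, T} \<subseteq> carrier_mat (m + k) (m + k)"
    using A B by (auto simp: X_def Y_def S_def T_def)
  have "A + - A = 0\<^sub>m m k" "- A + A = 0\<^sub>m m k" "- 0\<^sub>m k k + 1\<^sub>m k = (1\<^sub>m k :: complex mat)"
    using A by (auto intro!: eq_matI)
  then have ST: "S * T = 1\<^sub>m (m + k)" and TS: "T * S = 1\<^sub>m (m + k)"
    unfolding S_def T_def four_block_one_mat[of m k, symmetric] using A
    by (subst mult_four_block_mat[of _ m m _ k _ k]; auto)+
  have "X * S = four_block_mat (A * B) (A * B * A) B (B * A)"
    unfolding X_def S_def using A B by (subst mult_four_block_mat[of _ m m _ k _ k]) auto
  also have "\<dots> = S * Y"
    unfolding Y_def S_def using A B
    by (subst mult_four_block_mat[of _ m m _ k _ k]) (auto simp: assoc_mult_mat[OF A B A])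
  finally have XS: "X * S = S * Y" .
  have "X = S * Y * T"
    using carr by (auto simp flip: XS simp: assoc_mult_mat[of X "m + k" "m + k" S "m + k" T "m + k"] ST)
  then have "similar_mat X Y"
    using carr ST TS by (intro similar_matI) auto
  moreover have "char_poly X = char_poly (A * B) * [:0, 1:] ^ k"
    unfolding X_def using char_poly_factorized[OF AB] char_poly_factorized[of "0\<^sub>m k k" k]
    by (subst char_poly_0_block'[OF refl _ _ AB B]) (auto simp: char_poly_zero_mat)
  moreover have "char_poly Y = [:0, 1:] ^ m * char_poly (B * A)"
    unfolding Y_def using char_poly_factorized[OF BA] char_poly_factorized[of "0\<^sub>m m m" m]
    by (subst char_poly_0_block'[OF refl _ _ _ B BA]) (auto simp: char_poly_zero_mat)
  ultimately show ?thesis by (simp add: char_poly_similar)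
qed

lemma sum_ent_term_proots_mult_X_power:
  fixes p :: "complex poly"
  assumes "p \<noteq> 0"
  shows "(\<Sum>\<mu>\<in>#proots (p * [:0, 1:] ^ j). ent_term (Re \<mu>)) = (\<Sum>\<mu>\<in>#proots p. ent_term (Re \<mu>))"
proof -
  have "(\<Sum>\<mu>\<in>#repeat_mset j {#0::complex#}. ent_term (Re \<mu>)) = 0"
    by (induction j) (auto simp: ent_term_def)
  then show ?thesis using assms by (simp add: proots_mult proots_power)
qed

lemma char_poly_nonzero: "A \<in> carrier_mat n n \<Longrightarrow> char_poly (A :: complex mat) \<noteq> 0"
  using degree_monic_char_poly[of A n] by auto

lemma vn_entropy_mult_commute:
  fixes A B :: "complex mat"
  assumes A: "A \<in> carrier_mat m k" and B: "B \<in> carrier_mat k m"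
  shows "vn_entropy (A * B) = vn_entropy (B * A)"
proof -
  have "char_poly (A * B) \<noteq> 0" "char_poly (B * A) \<noteq> 0"
    using A B by (metis mult_carrier_mat char_poly_nonzero)+
  then show ?thesis
    unfolding vn_entropy_def
    by (metis sum_ent_term_proots_mult_X_power char_poly_mult_commute[OF A B] mult.commute)
qed

lemma vn_entropy_transpose:
  "A \<in> carrier_mat n n \<Longrightarrow> vn_entropy (transpose_mat A) = vn_entropy A"
  by (simp add: vn_entropy_def)

lemma vn_entropy_similar: "similar_mat A (B :: complex mat) \<Longrightarrow> vn_entropy A = vn_entropy B"
  by (simp add: vn_entropy_def char_poly_similar)

lemma xor_less_exp: "a < 2^n \<Longrightarrow> b < 2^n \<Longrightarrow> xor a b < (2::nat)^n"
  by (metis take_bit_nat_eq_self_iff take_bit_xor)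

lemma xor_left_self_nat [simp]: "xor x (xor x y) = (y::nat)"
  by (simp add: xor.assoc[symmetric])

lemma xor_left_cancel_nat [simp]: "xor x a = xor x b \<longleftrightarrow> (a::nat) = b"
  by (metis xor_left_self_nat)

lemma xor_eq_0_iff_nat [simp]: "xor a b = 0 \<longleftrightarrow> (a::nat) = b"
  by (metis xor_left_self_nat xor.right_neutral xor_self_eq)

lemma eq_xor_iff_nat: "i = xor x a \<longleftrightarrow> a = xor x (i::nat)"
  by (metis xor_left_self_nat)

lemma bit_imp_less_of_less_exp: "bit (c::nat) j \<Longrightarrow> c < 2^n \<Longrightarrow> j < n"
  by (metis bit_take_bit_iff take_bit_nat_eq_self_iff)

lemma odd_card_sym_diff:
  assumes "finite A" "finite B"
  shows "odd (card {i. (i \<in> A) \<noteq> (i \<in> B)}) \<longleftrightarrow> odd (card A) \<noteq> odd (card B)"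
proof -
  have sym_diff: "{i. (i \<in> A) \<noteq> (i \<in> B)} = (A \<union> B) - (A \<inter> B)" by auto
  have "card (A \<union> B) + card (A \<inter> B) = card A + card B"
    using card_Un_Int[OF assms] by simp
  moreover have "card ((A \<union> B) - (A \<inter> B)) = card (A \<union> B) - card (A \<inter> B)"
    using assms by (intro card_Diff_subset) auto
  moreover have "card (A \<inter> B) \<le> card (A \<union> B)" using assms by (intro card_mono) auto
  ultimately have "card {i. (i \<in> A) \<noteq> (i \<in> B)} + 2 * card (A \<inter> B) = card A + card B"
    unfolding sym_diff by linarith
  then have "odd (card {i. (i \<in> A) \<noteq> (i \<in> B)} + 2 * card (A \<inter> B)) = odd (card A + card B)"
    by simp
  then show ?thesis by simp
qed

lemma f2dot_commute: "f2dot n x z = f2dot n z x"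
  unfolding f2dot_def by (simp add: conj_commute)

lemma f2dot_zero_right [simp]: "\<not> f2dot n x 0"
  unfolding f2dot_def by simp

lemma f2dot_xor_right: "f2dot n x (xor y z) \<longleftrightarrow> f2dot n x y \<noteq> f2dot n x z"
proof -
  let ?A = "{i. i < n \<and> bit x i \<and> bit y i}" and ?B = "{i. i < n \<and> bit x i \<and> bit z i}"
  have "{i. i < n \<and> bit x i \<and> bit (xor y z) i} = {i. (i \<in> ?A) \<noteq> (i \<in> ?B)}"
    by (auto simp: bit_xor_iff)
  then show ?thesis unfolding f2dot_def using odd_card_sym_diff[of ?A ?B] by simp
qed

lemma f2dot_xor_left: "f2dot n (xor y z) x \<longleftrightarrow> f2dot n y x \<noteq> f2dot n z x"
  using f2dot_xor_right f2dot_commute by metis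

lemma f2dot_exp_left: "j < n \<Longrightarrow> f2dot n (2^j) c = bit c j"
proof -
  assume "j < n"
  then have "{i. i < n \<and> bit ((2::nat)^j) i \<and> bit c i} = (if bit c j then {j} else {})"
    by (auto simp: bit_exp_iff)
  then show ?thesis unfolding f2dot_def by simp
qed

definition parity_sign :: "bool \<Rightarrow> complex" where
  "parity_sign b = (if b then -1 else 1)"

lemma parity_sign_simps [simp]:
  "parity_sign False = 1" "cnj (parity_sign b) = parity_sign b" "parity_sign b * parity_sign b = 1"
  by (simp_all add: parity_sign_def)

lemma parity_sign_mult: "parity_sign b * parity_sign c = parity_sign (b \<noteq> c)"
  by (simp add: parity_sign_def)

lemma sum_parity_sign_f2dot:
  assumes c: "c < 2^n"
  shows "(\<Sum>x<2^n. parity_sign (f2dot n x c)) = (if c = 0 then 2^n else 0)"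
proof (cases "c = 0")
  case True
  then show ?thesis by (simp add: parity_sign_def)
next
  case False
  then obtain j where bj: "bit c j" using bit_eq_iff[of c 0] by auto
  then have j: "j < n" using c by (rule bit_imp_less_of_less_exp)
  let ?s = "\<lambda>x. parity_sign (f2dot n x c)"
  txt \<open>Translating by \<open>2^j\<close>, a bit of \<open>c\<close>, flips every sign.\<close>
  have "(\<Sum>x<2^n. ?s x) = (\<Sum>x<2^n. ?s (xor x (2^j)))"
    using j by (intro sum.reindex_bij_witness[where i = "\<lambda>x. xor x (2^j)" and j = "\<lambda>x. xor x (2^j)"])
      (auto simp: xor.assoc xor_less_exp)
  also have "\<dots> = (\<Sum>x<2^n. - ?s x)"
    by (intro sum.cong) (auto simp: f2dot_xor_left f2dot_exp_left[OF j] bj parity_sign_def)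
  finally show ?thesis using False by (simp add: sum_negf)
qed

lemma index_mult_mat_sum:
  fixes A B :: "'a::comm_ring mat"
  assumes "A \<in> carrier_mat r m" "B \<in> carrier_mat m c" "i < r" "j < c"
  shows "(A * B) $$ (i,j) = (\<Sum>t<m. A $$ (i,t) * B $$ (t,j))"
  using assms by (auto simp: scalar_prod_def atLeast0LessThan intro: sum.cong)

lemma index_mat_adjoint:
  fixes A :: "complex mat"
  assumes "A \<in> carrier_mat r c" "i < c" "j < r"
  shows "mat_adjoint A $$ (i,j) = cnj (A $$ (j,i))"
  using assms by (simp add: mat_adjoint_def mat_of_rows_def conjugate_complex_def)

lemma mat_adjoint_carrier:
  fixes A :: "complex mat"
  shows "A \<in> carrier_mat r c \<Longrightarrow> mat_adjoint A \<in> carrier_mat c r"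
  by (simp add: mat_adjoint_def mat_of_rows_def)

lemma pair_index_less:
  assumes "i < (d::nat)" "k < e"
  shows "i * e + k < d * e"
proof -
  have "i * e + k < (i + 1) * e" using assms by simp
  also have "\<dots> \<le> d * e" using assms by (intro mult_right_mono) auto
  finally show ?thesis .
qed

lemma sum_lessThan_mult:
  fixes f :: "nat \<Rightarrow> 'a::comm_monoid_add"
  shows "(\<Sum>r<m * d. f r) = (\<Sum>x<m. \<Sum>i<d. f (x * d + i))"
proof -
  have "(\<Sum>i<d. f (x * d + i)) = sum f {x * d..<x * d + d}" for x
    using sum.shift_bounds_nat_ivl[of f 0 "x * d" d] by (simp add: atLeast0LessThan add.commute)
  then show ?thesis by (simp add: sum.nat_group[symmetric])
qed

lemma pair_index_div_mod_less:
  assumes "r < d * (d::nat)"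
  shows "r div d < d" "r mod d < d"
proof -
  have "d > 0" using assms by (cases d) auto
  then show "r div d < d" "r mod d < d" using assms by (auto simp: less_mult_imp_div_less)
qed

definition matrix_unit :: "nat \<Rightarrow> nat \<Rightarrow> nat \<Rightarrow> complex mat" where
  "matrix_unit d x y = mat d d (\<lambda>(i,j). if i = x \<and> j = y then 1 else 0)"

lemma ket_bra_eq_matrix_unit: "ket_bra d x = matrix_unit d x x"
  unfolding ket_bra_def matrix_unit_def ..

lemma index_conj_matrix_unit:
  fixes W :: "complex mat"
  assumes W: "W \<in> carrier_mat N d" and xy: "x < d" "y < d" and ij: "i < N" "j < N"
  shows "(W * matrix_unit d x y * mat_adjoint W) $$ (i,j) = W $$ (i,x) * cnj (W $$ (j,y))"
proof -
  have U: "matrix_unit d x y \<in> carrier_mat d d" by (simp add: matrix_unit_def)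
  have WU: "(W * matrix_unit d x y) $$ (i,c) = (if c = y then W $$ (i,x) else 0)" if c: "c < d" for c
  proof -
    have "(W * matrix_unit d x y) $$ (i,c) = (\<Sum>t<d. W $$ (i,t) * matrix_unit d x y $$ (t,c))"
      by (rule index_mult_mat_sum[OF W U ij(1) c])
    also have "\<dots> = (\<Sum>t<d. if t = x then (if c = y then W $$ (i,x) else 0) else 0)"
      by (intro sum.cong) (use c in \<open>auto simp: matrix_unit_def\<close>)
    finally show ?thesis using xy by simp
  qed
  have "(W * matrix_unit d x y * mat_adjoint W) $$ (i,j)
      = (\<Sum>c<d. (W * matrix_unit d x y) $$ (i,c) * mat_adjoint W $$ (c,j))"
    using W U by (intro index_mult_mat_sum[OF _ mat_adjoint_carrier[OF W] ij]) auto
  also have "\<dots> = (\<Sum>c<d. if c = y then W $$ (i,x) * cnj (W $$ (j,y)) else 0)"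
    by (intro sum.cong) (auto simp: WU index_mat_adjoint[OF W _ ij(2)])
  finally show ?thesis using xy by simp
qed

section \<open>Complementary channels and the Choi matrix\<close>

lemma stinespring_matrix_unit:
  assumes st: "stinespring d e \<Lambda> V" and "x < d" "y < d" "i < d" "j < d"
  shows "\<Lambda> (matrix_unit d x y) $$ (i,j) = (\<Sum>k<e. V $$ (i*e+k, x) * cnj (V $$ (j*e+k, y)))"
proof -
  have V: "V \<in> carrier_mat (d*e) d" using st by (simp add: stinespring_def)
  have "\<Lambda> (matrix_unit d x y) = ptrace_E d e (V * matrix_unit d x y * mat_adjoint V)"
    using st by (simp add: stinespring_def matrix_unit_def)
  then show ?thesis using assms by (simp add: ptrace_E_def index_conj_matrix_unit[OF V] pair_index_less)
qed

lemma compl_channel_ket_bra: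
  assumes V: "V \<in> carrier_mat (d*e) d" and "x < d" "k < e" "l < e"
  shows "compl_channel d e V (ket_bra d x) $$ (k,l) = (\<Sum>i<d. V $$ (i*e+k, x) * cnj (V $$ (i*e+l, x)))"
  using assms
  by (simp add: compl_channel_def ptrace_H_def ket_bra_eq_matrix_unit index_conj_matrix_unit[OF V]
      pair_index_less)

lemma vn_entropy_compl_channel_ket_bra:
  assumes st: "stinespring d e \<Lambda> V" and x: "x < d"
  shows "vn_entropy (compl_channel d e V (ket_bra d x)) = vn_entropy (\<Lambda> (ket_bra d x))"
proof -
  have V: "V \<in> carrier_mat (d*e) d" using st by (simp add: stinespring_def)
  define M where "M = mat d e (\<lambda>(i,k). V $$ (i*e+k, x))"
  have M: "M \<in> carrier_mat d e" and M': "mat_adjoint M \<in> carrier_mat e d"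
    by (auto simp: M_def intro: mat_adjoint_carrier)
  have M'_entry: "mat_adjoint M $$ (k,i) = cnj (V $$ (i*e+k, x))" if "k < e" "i < d" for k i
    using that index_mat_adjoint[OF M, of k i] by (simp add: M_def)
  have M_entry: "M $$ (i,k) = V $$ (i*e+k, x)" if "i < d" "k < e" for i k
    using that by (simp add: M_def)
  have "compl_channel d e V (ket_bra d x) = transpose_mat (mat_adjoint M * M)"
  proof (rule eq_matI)
    fix k l
    assume "k < dim_row (transpose_mat (mat_adjoint M * M))" "l < dim_col (transpose_mat (mat_adjoint M * M))"
    then have k: "k < e" and l: "l < e" using M M' by auto
    then show "compl_channel d e V (ket_bra d x) $$ (k,l) = transpose_mat (mat_adjoint M * M) $$ (k,l)"
      using M M' x by (simp add: compl_channel_ket_bra[OF V] index_mult_mat_sum[OF M' M l k]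
          M'_entry M_entry mult.commute)
  qed (use M M' in \<open>auto simp: compl_channel_def ptrace_H_def\<close>)
  moreover have "\<Lambda> (ket_bra d x) = M * mat_adjoint M"
  proof (rule eq_matI)
    fix i j assume "i < dim_row (M * mat_adjoint M)" "j < dim_col (M * mat_adjoint M)"
    then have i: "i < d" and j: "j < d" using M' M by auto
    then show "\<Lambda> (ket_bra d x) $$ (i,j) = (M * mat_adjoint M) $$ (i,j)"
      using x by (simp add: ket_bra_eq_matrix_unit stinespring_matrix_unit[OF st]
          index_mult_mat_sum[OF M M' i j] M'_entry M_entry)
  qed (use st M M' in \<open>auto simp: stinespring_def ptrace_E_def ket_bra_def\<close>)
  ultimately show ?thesis
    using M M' vn_entropy_transpose[of "mat_adjoint M * M" e] vn_entropy_mult_commute[OF M' M]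
    by simp
qed

text \<open>Row and column \<open>x * d + i\<close> stand for \<open>|x\<rangle> \<otimes> |i\<rangle>\<close>, input first:
  the Choi matrix is \<open>\<Sum>\<^sub>x\<^sub>,\<^sub>y |x\<rangle>\<langle>y| \<otimes> \<Lambda>(|x\<rangle>\<langle>y|)\<close>.\<close>
definition choi_mat :: "nat \<Rightarrow> (complex mat \<Rightarrow> complex mat) \<Rightarrow> complex mat" where
  "choi_mat d \<Lambda> = mat (d*d) (d*d)
     (\<lambda>(r,s). \<Lambda> (matrix_unit d (r div d) (s div d)) $$ (r mod d, s mod d))"

lemma vn_entropy_compl_channel_uniform_average:
  assumes st: "stinespring d e \<Lambda> V"
  shows "vn_entropy (mat e e (\<lambda>(k,l). \<Sum>x<d. complex_of_real (1 / real d) *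
            compl_channel d e V (ket_bra d x) $$ (k,l)))
       = vn_entropy (complex_of_real (1 / real d) \<cdot>\<^sub>m choi_mat d \<Lambda>)"
proof -
  let ?c = "complex_of_real (1 / real d)"
  have V: "V \<in> carrier_mat (d*e) d" using st by (simp add: stinespring_def)
  define G where "G = mat (d*d) e (\<lambda>(r,k). V $$ ((r mod d)*e+k, r div d))"
  have G: "G \<in> carrier_mat (d*d) e" and G': "mat_adjoint G \<in> carrier_mat e (d*d)"
    by (auto simp: G_def intro: mat_adjoint_carrier)
  have G'_entry: "mat_adjoint G $$ (k,r) = cnj (V $$ ((r mod d)*e+k, r div d))"
    if "k < e" "r < d*d" for k r
    using that index_mat_adjoint[OF G, of k r] by (simp add: G_def)
  have G_entry: "G $$ (r,k) = V $$ ((r mod d)*e+k, r div d)" if "r < d*d" "k < e" for r k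
    using that by (simp add: G_def)
  have "mat e e (\<lambda>(k,l). \<Sum>x<d. ?c * compl_channel d e V (ket_bra d x) $$ (k,l))
      = transpose_mat (?c \<cdot>\<^sub>m (mat_adjoint G * G))"
  proof (rule eq_matI)
    fix k l assume "k < dim_row (transpose_mat (?c \<cdot>\<^sub>m (mat_adjoint G * G)))"
      "l < dim_col (transpose_mat (?c \<cdot>\<^sub>m (mat_adjoint G * G)))"
    then have k: "k < e" and l: "l < e" using G G' by auto
    have "(mat_adjoint G * G) $$ (l,k) = (\<Sum>x<d. \<Sum>i<d. V $$ (i*e+k, x) * cnj (V $$ (i*e+l, x)))"
      using l k by (simp add: index_mult_mat_sum[OF G' G l k] sum_lessThan_mult G'_entry G_entry
          pair_index_less mult.commute)
    then show "mat e e (\<lambda>(k,l). \<Sum>x<d. ?c * compl_channel d e V (ket_bra d x) $$ (k,l)) $$ (k,l)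
        = transpose_mat (?c \<cdot>\<^sub>m (mat_adjoint G * G)) $$ (k,l)"
      using k l G G' by (simp add: compl_channel_ket_bra[OF V] sum_divide_distrib[symmetric])
  qed (use G G' in auto)
  also have "\<dots> = transpose_mat ((?c \<cdot>\<^sub>m mat_adjoint G) * G)"
    using G G' by (simp add: mult_smult_assoc_mat)
  moreover have "choi_mat d \<Lambda> = G * mat_adjoint G"
  proof (rule eq_matI)
    fix r s assume "r < dim_row (G * mat_adjoint G)" "s < dim_col (G * mat_adjoint G)"
    then have r: "r < d*d" and s: "s < d*d" using G G' by auto
    show "choi_mat d \<Lambda> $$ (r,s) = (G * mat_adjoint G) $$ (r,s)"
      using pair_index_div_mod_less[OF r] pair_index_div_mod_less[OF s]
      by (simp add: choi_mat_def r s stinespring_matrix_unit[OF st] index_mult_mat_sum[OF G G' r s]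
          G'_entry G_entry)
  qed (use G G' in \<open>auto simp: choi_mat_def\<close>)
  then have "?c \<cdot>\<^sub>m choi_mat d \<Lambda> = G * (?c \<cdot>\<^sub>m mat_adjoint G)"
    using G G' by (simp add: mult_smult_distrib)
  moreover have H: "?c \<cdot>\<^sub>m mat_adjoint G \<in> carrier_mat e (d*d)" using G' by simp
  ultimately show ?thesis
    by (simp only: vn_entropy_transpose[OF mult_carrier_mat[OF H G]] vn_entropy_mult_commute[OF H G])
qed

section \<open>Pauli channels\<close>

definition pauli_entry :: "nat \<Rightarrow> nat \<Rightarrow> nat \<Rightarrow> nat \<Rightarrow> nat \<Rightarrow> complex" where
  "pauli_entry n a b i x = (if i = xor x a then parity_sign (f2dot n x b) else 0)"

lemma pauliX_pauliZ_carrier: "pauliX n a * pauliZ n b \<in> carrier_mat (2^n) (2^n)"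
  by (rule mult_carrier_mat) (auto simp: pauliX_def pauliZ_def)

lemma index_pauliX_pauliZ:
  assumes "i < 2^n" "x < 2^n"
  shows "(pauliX n a * pauliZ n b) $$ (i,x) = pauli_entry n a b i x"
proof -
  have "(pauliX n a * pauliZ n b) $$ (i,x) = (\<Sum>t<2^n. pauliX n a $$ (i,t) * pauliZ n b $$ (t,x))"
    using assms by (intro index_mult_mat_sum) (auto simp: pauliX_def pauliZ_def)
  also have "\<dots> = (\<Sum>t<2^n. if t = x then pauli_entry n a b i x else 0)"
    using assms by (intro sum.cong) (auto simp: pauliX_def pauliZ_def pauli_entry_def parity_sign_def)
  finally show ?thesis using assms by simp
qed

lemma pauli_channel_matrix_unit:
  assumes "x < 2^n" "y < 2^n" "i < 2^n" "j < 2^n"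
  shows "pauli_channel n P (matrix_unit (2^n) x y) $$ (i,j) =
    (\<Sum>a<2^n. \<Sum>b<2^n. complex_of_real (P a b) * (pauli_entry n a b i x * cnj (pauli_entry n a b j y)))"
  using assms
  by (simp add: pauli_channel_def index_conj_matrix_unit[OF pauliX_pauliZ_carrier] index_pauliX_pauliZ)

lemma pauli_channel_ket_bra:
  assumes x: "x < 2^n"
  shows "pauli_channel n P (ket_bra (2^n) x)
    = mat_diag (2^n) (\<lambda>i. complex_of_real (\<Sum>b<2^n. P (xor x i) b))" (is "_ = ?D")
proof (rule eq_matI)
  fix i j assume "i < dim_row ?D" "j < dim_col ?D"
  then have i: "i < 2^n" and j: "j < 2^n" by (auto simp: mat_diag_def)
  have "pauli_channel n P (ket_bra (2^n) x) $$ (i,j)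
      = (\<Sum>a<2^n. if a = xor x i then (if i = j then (\<Sum>b<2^n. complex_of_real (P a b)) else 0) else 0)"
    unfolding ket_bra_eq_matrix_unit pauli_channel_matrix_unit[OF x x i j]
    by (intro sum.cong) (auto simp: pauli_entry_def eq_xor_iff_nat)
  then show "pauli_channel n P (ket_bra (2^n) x) $$ (i,j) = ?D $$ (i,j)"
    using x i j by (simp add: mat_diag_def xor_less_exp)
qed (auto simp: pauli_channel_def mat_diag_def)

lemma vn_entropy_pauli_channel_ket_bra:
  assumes x: "x < 2^n"
  shows "vn_entropy (pauli_channel n P (ket_bra (2^n) x)) = (\<Sum>a<2^n. ent_term (\<Sum>b<2^n. P a b))"
proof -
  have "vn_entropy (pauli_channel n P (ket_bra (2^n) x)) = (\<Sum>i<2^n. ent_term (\<Sum>b<2^n. P (xor x i) b))"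
    by (simp add: pauli_channel_ket_bra[OF x] vn_entropy_mat_diag)
  also have "\<dots> = (\<Sum>a<2^n. ent_term (\<Sum>b<2^n. P a b))"
    using x by (intro sum.reindex_bij_witness[where i = "xor x" and j = "xor x"])
      (auto simp: xor_less_exp xor.assoc[symmetric])
  finally show ?thesis .
qed

lemma pauli_entry_orthogonal:
  assumes "a < 2^n" "a' < 2^n" "b < 2^n" "b' < 2^n"
  shows "(\<Sum>x<2^n. \<Sum>i<2^n. cnj (pauli_entry n a b i x) * pauli_entry n a' b' i x)
    = (if a = a' \<and> b = b' then 2^n else 0)"
proof -
  have "(\<Sum>i<2^n. cnj (pauli_entry n a b i x) * pauli_entry n a' b' i x)
      = (if a = a' then parity_sign (f2dot n x (xor b b')) else 0)" if x: "x < 2^n" for x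
  proof -
    have "(\<Sum>i<2^n. cnj (pauli_entry n a b i x) * pauli_entry n a' b' i x)
        = (\<Sum>i<2^n. if i = xor x a then (if a = a' then parity_sign (f2dot n x (xor b b')) else 0) else 0)"
      by (intro sum.cong) (auto simp: pauli_entry_def parity_sign_mult f2dot_xor_right)
    then show ?thesis using x assms by (simp add: xor_less_exp)
  qed
  then have "(\<Sum>x<2^n. \<Sum>i<2^n. cnj (pauli_entry n a b i x) * pauli_entry n a' b' i x)
      = (if a = a' then (\<Sum>x<2^n. parity_sign (f2dot n x (xor b b'))) else 0)"
    by simp
  also have "\<dots> = (if a = a' \<and> b = b' then 2^n else 0)"
    using assms by (simp add: sum_parity_sign_f2dot xor_less_exp)
  finally show ?thesis .
qed

text \<open>Column \<open>a * 2^n + b\<close> is the vectorisation of \<open>X\<^sup>a Z\<^sup>b\<close>, an unnormalised Bell state.\<close>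
definition bell_mat :: "nat \<Rightarrow> complex mat" where
  "bell_mat n = mat (2^n * 2^n) (2^n * 2^n)
     (\<lambda>(r,c). pauli_entry n (c div 2^n) (c mod 2^n) (r mod 2^n) (r div 2^n))"

lemma bell_mat_carrier: "bell_mat n \<in> carrier_mat (2^n * 2^n) (2^n * 2^n)"
  by (simp add: bell_mat_def)

lemma index_bell_mat_pair:
  assumes "x < 2^n" "i < 2^n" "c < 2^n * 2^n"
  shows "bell_mat n $$ (x * 2^n + i, c) = pauli_entry n (c div 2^n) (c mod 2^n) i x"
  using assms by (simp add: bell_mat_def pair_index_less)

lemma bell_mat_adjoint_mult:
  "mat_adjoint (bell_mat n) * bell_mat n = of_nat (2^n) \<cdot>\<^sub>m 1\<^sub>m (2^n * 2^n)"
proof (rule eq_matI)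
  let ?U = "bell_mat n"
  have U: "?U \<in> carrier_mat (2^n * 2^n) (2^n * 2^n)" by (rule bell_mat_carrier)
  have U': "mat_adjoint ?U \<in> carrier_mat (2^n * 2^n) (2^n * 2^n)" by (rule mat_adjoint_carrier[OF U])
  fix c c' assume "c < dim_row (of_nat (2^n) \<cdot>\<^sub>m 1\<^sub>m (2^n * 2^n) :: complex mat)"
    "c' < dim_col (of_nat (2^n) \<cdot>\<^sub>m 1\<^sub>m (2^n * 2^n) :: complex mat)"
  then have c: "c < 2^n * 2^n" and c': "c' < 2^n * 2^n" by auto
  have "(mat_adjoint ?U * ?U) $$ (c,c')
      = (\<Sum>x<2^n. \<Sum>i<2^n. cnj (pauli_entry n (c div 2^n) (c mod 2^n) i x)
          * pauli_entry n (c' div 2^n) (c' mod 2^n) i x)"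
    using c c' by (simp add: index_mult_mat_sum[OF U' U c c'] sum_lessThan_mult
        index_mat_adjoint[OF U] index_bell_mat_pair pair_index_less)
  also have "\<dots> = (if c = c' then 2^n else 0)"
    using pair_index_div_mod_less[OF c] pair_index_div_mod_less[OF c']
    by (simp add: pauli_entry_orthogonal) (metis div_mult_mod_eq)
  finally show "(mat_adjoint ?U * ?U) $$ (c,c') = (of_nat (2^n) \<cdot>\<^sub>m 1\<^sub>m (2^n * 2^n)) $$ (c,c')"
    using c c' by simp
qed (auto simp: bell_mat_def mat_adjoint_def mat_of_rows_def)

lemma choi_pauli_channel:
  "choi_mat (2^n) (pauli_channel n P) = bell_mat n
     * mat_diag (2^n * 2^n) (\<lambda>c. complex_of_real (P (c div 2^n) (c mod 2^n))) * mat_adjoint (bell_mat n)"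
  (is "_ = ?U * ?D * _")
proof (rule eq_matI)
  have U: "?U \<in> carrier_mat (2^n * 2^n) (2^n * 2^n)" by (rule bell_mat_carrier)
  have U': "mat_adjoint ?U \<in> carrier_mat (2^n * 2^n) (2^n * 2^n)" by (rule mat_adjoint_carrier[OF U])
  have UD: "?U * ?D \<in> carrier_mat (2^n * 2^n) (2^n * 2^n)" using U by simp
  fix r s assume "r < dim_row (?U * ?D * mat_adjoint ?U)" "s < dim_col (?U * ?D * mat_adjoint ?U)"
  then have r: "r < 2^n * 2^n" and s: "s < 2^n * 2^n" using U U' by auto
  have "(?U * ?D * mat_adjoint ?U) $$ (r,s) = (\<Sum>c<2^n * 2^n. (?U * ?D) $$ (r,c) * mat_adjoint ?U $$ (c,s))"
    by (rule index_mult_mat_sum[OF UD U' r s])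
  also have "\<dots> = (\<Sum>c<2^n * 2^n. ?U $$ (r,c) * complex_of_real (P (c div 2^n) (c mod 2^n)) * cnj (?U $$ (s,c)))"
    using r s by (intro sum.cong) (auto simp: mat_diag_mult_right[OF U] index_mat_adjoint[OF U])
  also have "\<dots> = (\<Sum>a<2^n. \<Sum>b<2^n.
      ?U $$ (r, a * 2^n + b) * complex_of_real (P a b) * cnj (?U $$ (s, a * 2^n + b)))"
    unfolding sum_lessThan_mult by (intro sum.cong refl) simp
  also have "\<dots> = choi_mat (2^n) (pauli_channel n P) $$ (r,s)"
    using r s pair_index_div_mod_less[OF r] pair_index_div_mod_less[OF s]
    by (simp add: choi_mat_def pauli_channel_matrix_unit bell_mat_def pair_index_less mult_ac)
  finally show "choi_mat (2^n) (pauli_channel n P) $$ (r,s) = (?U * ?D * mat_adjoint ?U) $$ (r,s)" ..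
qed (auto simp: choi_mat_def bell_mat_def mat_adjoint_def mat_of_rows_def)

lemma vn_entropy_choi_pauli_channel:
  "vn_entropy (complex_of_real (1 / 2^n) \<cdot>\<^sub>m choi_mat (2^n) (pauli_channel n P))
     = (\<Sum>a<2^n. \<Sum>b<2^n. ent_term (P a b))"
proof -
  let ?c = "complex_of_real (1 / 2^n)"
  let ?U = "bell_mat n" and ?D = "mat_diag (2^n * 2^n) (\<lambda>c. complex_of_real (P (c div 2^n) (c mod 2^n)))"
  define Q where "Q = ?c \<cdot>\<^sub>m mat_adjoint ?U"
  have U: "?U \<in> carrier_mat (2^n * 2^n) (2^n * 2^n)" by (rule bell_mat_carrier)
  have U': "mat_adjoint ?U \<in> carrier_mat (2^n * 2^n) (2^n * 2^n)" by (rule mat_adjoint_carrier[OF U])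
  have Q: "Q \<in> carrier_mat (2^n * 2^n) (2^n * 2^n)" using U' by (simp add: Q_def)
  have "Q * ?U = ?c \<cdot>\<^sub>m (of_nat (2^n) \<cdot>\<^sub>m 1\<^sub>m (2^n * 2^n))"
    using U U' by (simp add: Q_def mult_smult_assoc_mat bell_mat_adjoint_mult)
  also have "\<dots> = 1\<^sub>m (2^n * 2^n)" by (rule eq_matI) auto
  finally have QU: "Q * ?U = 1\<^sub>m (2^n * 2^n)" .
  have "?c \<cdot>\<^sub>m choi_mat (2^n) (pauli_channel n P) = ?U * ?D * Q"
    using mult_smult_distrib[OF mult_carrier_mat[OF U mat_diag_dim] U']
    by (simp add: choi_pauli_channel Q_def)
  then have "similar_mat (?c \<cdot>\<^sub>m choi_mat (2^n) (pauli_channel n P)) ?D"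
    using U Q QU mat_mult_left_right_inverse[OF Q U QU] by (intro similar_matI) auto
  then have "vn_entropy (?c \<cdot>\<^sub>m choi_mat (2^n) (pauli_channel n P)) = vn_entropy ?D"
    by (rule vn_entropy_similar)
  also have "\<dots> = (\<Sum>a<2^n. \<Sum>b<2^n. ent_term (P a b))"
    by (simp add: vn_entropy_mat_diag sum_lessThan_mult)
  finally show ?thesis .
qed

theorem lemma2:
  fixes n dE :: nat and P :: "nat \<Rightarrow> nat \<Rightarrow> real" and V :: "complex mat"
  assumes "pauli_dist n P"
    and "stinespring (2^n) dE (pauli_channel n P) V"
  shows "holevo dE (2^n) (\<lambda>_. 1 / 2^n) (\<lambda>x. compl_channel (2^n) dE V (ket_bra (2^n) x))
           \<le> eta n (1 - PZ n P 0)"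
proof -
  have average: "vn_entropy (mat dE dE (\<lambda>(k,l). \<Sum>x<2^n. complex_of_real (1 / 2^n) *
      compl_channel (2^n) dE V (ket_bra (2^n) x) $$ (k,l))) = (\<Sum>a<2^n. \<Sum>b<2^n. ent_term (P a b))"
    using vn_entropy_compl_channel_uniform_average[OF assms(2)] vn_entropy_choi_pauli_channel
    by simp
  have outputs: "vn_entropy (compl_channel (2^n) dE V (ket_bra (2^n) x))
      = (\<Sum>a<2^n. ent_term (\<Sum>b<2^n. P a b))" if "x < 2^n" for x
    using that by (simp add: vn_entropy_compl_channel_ket_bra[OF assms(2)] vn_entropy_pauli_channel_ket_bra)
  have "holevo dE (2^n) (\<lambda>_. 1 / 2^n) (\<lambda>x. compl_channel (2^n) dE V (ket_bra (2^n) x))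
      = (\<Sum>a<2^n. \<Sum>b<2^n. ent_term (P a b)) - (\<Sum>a<2^n. ent_term (\<Sum>b<2^n. P a b))"
    unfolding holevo_def average by (simp add: outputs)
  also have "\<dots> \<le> eta n (1 - PZ n P 0)"
    by (rule pauli_dist_cond_entropy_le_eta[OF assms(1)])
  finally show ?thesis .
qed

end
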